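(* Let $p$ be an odd prime, $m$ and $u$ positive integers, $q=p^m$, and $v=\gcd(m,u)$. If $\frac{m}{v}\equiv 0\pmod 4$, then \[ \left|\{c\in\mathbb{F}_q : \text{the equation } X^{p^{2u}}+X=c^{p^u} \text{ has a solution } X\in\mathbb{F}_q\}\right| = p^{m-2v}. \] *)

theory Defs
  imports "HOL-Computational_Algebra.Primes"
begin

end

theory Submission
  imports Defs "HOL-Number_Theory.Residues" "HOL-Computational_Algebra.Polynomial"
begin

text \<open>
  The maps \<open>x \<mapsto> x ^ p ^ k\<close> are additive bijections, so the set counted is the preimage,
  under such a bijection, of the image of the additive map \<open>L x = x ^ p ^ (2 * u) + x\<close>;
  its size is therefore \<open>q / |ker L|\<close>. Because \<open>4\<close> divides \<open>m / v\<close>, we have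
  \<open>gcd (4 * u) m = 4 * v\<close> with \<open>u / v\<close> odd, and then \<open>x ^ p ^ (2 * u) = - x\<close> holds iff
  \<open>x ^ p ^ (2 * v) = - x\<close>. In odd characteristic the subfield of order \<open>p ^ (4 * v)\<close> is the
  direct sum of the \<open>\<pm>1\<close>-eigenspaces of \<open>x \<mapsto> x ^ p ^ (2 * v)\<close>, the \<open>+1\<close>-eigenspace being
  the subfield of order \<open>p ^ (2 * v)\<close>; hence \<open>|ker L| = p ^ (2 * v)\<close>. The subfield orders
  follow from the root bound for \<open>x ^ p ^ d - x\<close> and from the trace map, whose kernel
  contains the image of \<open>x \<mapsto> x ^ p ^ d - x\<close>.
\<close>

lemma CHAR_eq_prime_if_card_eq_power:
  assumes "card (UNIV :: 'a::{field,finite} set) = p ^ m" and "prime p"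
  shows "CHAR('a) = p"
proof -
  have "prime CHAR('a)"
    using prime_CHAR_semidom finite_imp_CHAR_pos by (metis finite_UNIV)
  moreover have "CHAR('a) dvd p ^ m"
    using CHAR_dvd_CARD[where 'a='a] assms(1) by simp
  ultimately show ?thesis
    using assms(2) by (metis prime_dvd_power primes_dvd_imp_eq)
qed

lemma exponent_pos_if_card_eq_power:
  assumes "card (UNIV :: 'a::{field,finite} set) = c ^ m"
  shows "m > 0"
proof (rule ccontr)
  assume "\<not> m > 0"
  then obtain z where "UNIV = {z :: 'a}"
    using assms card_1_singletonE by auto
  then show False
    by (metis UNIV_I singletonD zero_neq_one)
qed

lemma power_card_eq_self:
  fixes x :: "'a::{field,finite}"
  shows "x ^ card (UNIV :: 'a set) = x"
proof (cases "x = 0")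
  case True
  then show ?thesis by (simp add: finite_UNIV_card_ge_0)
next
  case False
  let ?U = "UNIV - {0 :: 'a}"
  have "bij_betw ((*) x) ?U ?U"
    by (rule bij_betwI[where g = "\<lambda>y. y / x"]) (use False in auto)
  then have "\<Prod>?U = (\<Prod>y\<in>?U. x * y)"
    using prod.reindex_bij_betw[of "(*) x" ?U ?U "\<lambda>y. y"] by simp
  also have "\<dots> = x ^ card ?U * \<Prod>?U"
    by (simp add: prod.distrib)
  finally have "x ^ card ?U * \<Prod>?U = \<Prod>?U"
    by (rule sym)
  then have "x ^ card ?U = 1"
    by simp
  moreover have "card (UNIV :: 'a set) = Suc (card ?U)"
    by (simp add: card_Diff_singleton finite_UNIV_card_ge_0)
  ultimately show ?thesis
    by (simp only: power_Suc mult_1_right)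
qed

lemma card_UNIV_eq_card_range_times_card_kernel:
  fixes f :: "'a::{ab_group_add,finite} \<Rightarrow> 'b::ab_group_add"
  assumes add: "\<And>x y. f (x + y) = f x + f y"
  shows "card (UNIV :: 'a set) = card (range f) * card {x. f x = 0}"
proof -
  have diff: "f (x - y) = f x - f y" for x y
    using add[of "x - y" y] by (simp add: algebra_simps)
  define s where "s = inv_into UNIV f"
  have s: "y \<in> range f \<Longrightarrow> f (s y) = y" for y
    unfolding s_def by (simp add: f_inv_into_f)
  have "bij_betw (\<lambda>x. (f x, x - s (f x))) UNIV (range f \<times> {x. f x = 0})"
    by (rule bij_betw_byWitness[where f' = "\<lambda>(y, k). s y + k"]) (use s diff add in auto)
  then show ?thesis
    by (simp add: bij_betw_same_card card_cartesian_product)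
qed

lemma frobenius_minus:
  fixes x :: "'a::comm_ring_1"
  assumes "prime CHAR('a)"
  shows "(- x) ^ (CHAR('a) ^ k) = - (x ^ (CHAR('a) ^ k))"
proof -
  have "0 = (x + - x) ^ (CHAR('a) ^ k)"
    using assms by (simp add: prime_gt_0_nat power_0_left)
  also have "\<dots> = x ^ (CHAR('a) ^ k) + (- x) ^ (CHAR('a) ^ k)"
    using assms by (rule freshmans_dream') simp
  finally show ?thesis
    by (simp add: eq_neg_iff_add_eq_0 add.commute)
qed

lemma frobenius_diff:
  fixes x y :: "'a::comm_ring_1"
  assumes "prime CHAR('a)"
  shows "(x - y) ^ (CHAR('a) ^ k) = x ^ (CHAR('a) ^ k) - y ^ (CHAR('a) ^ k)"
  using freshmans_dream'[OF assms refl, of x "- y"] frobenius_minus[OF assms, of y] by simp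

lemma inj_frobenius:
  assumes "prime CHAR('a::idom)"
  shows "inj (\<lambda>x :: 'a. x ^ (CHAR('a) ^ k))"
proof (rule injI)
  fix x y :: 'a
  assume "x ^ (CHAR('a) ^ k) = y ^ (CHAR('a) ^ k)"
  then have "(x - y) ^ (CHAR('a) ^ k) = 0"
    by (simp add: frobenius_diff[OF assms])
  then show "x = y"
    by simp
qed

lemma two_neq_zero_if_odd_CHAR:
  assumes "odd CHAR('a::semiring_1)"
  shows "(2 :: 'a) \<noteq> 0"
proof
  assume "(2 :: 'a) = 0"
  then have "CHAR('a) dvd 2"
    by (metis of_nat_eq_0_iff_char_dvd of_nat_numeral)
  then have "CHAR('a) \<le> 2" and "CHAR('a) \<noteq> 0"
    by (simp_all add: dvd_imp_le) (metis dvd_0_left_iff gr0I zero_neq_numeral)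
  then have "CHAR('a) = 1"
    using assms by presburger
  then show False
    by (metis of_nat_1 of_nat_CHAR zero_neq_one)
qed

lemma power_power_add:
  fixes x :: "'a::monoid_mult"
  shows "x ^ (c ^ (a + b)) = (x ^ (c ^ a)) ^ (c ^ b)"
  by (simp add: power_add power_mult)

lemma power_power_mult_eq_self:
  fixes x :: "'a::monoid_mult"
  assumes "x ^ (c ^ a) = x"
  shows "x ^ (c ^ (j * a)) = x"
proof (induction j)
  case (Suc j)
  have "x ^ (c ^ (Suc j * a)) = (x ^ (c ^ (j * a))) ^ (c ^ a)"
    using power_power_add[of x c "j * a" a] by (simp add: add.commute)
  then show ?case
    using Suc assms by simp
qed simp

lemma power_power_gcd_eq_self:
  fixes x :: "'a::monoid_mult"
  assumes "x ^ (c ^ a) = x" and "x ^ (c ^ b) = x"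
  shows "x ^ (c ^ gcd a b) = x"
proof (cases "a = 0")
  case False
  then obtain s t where st: "a * s = b * t + gcd a b"
    using bezout_nat by blast
  have "x = x ^ (c ^ (s * a))"
    using power_power_mult_eq_self[OF assms(1)] by simp
  also have "\<dots> = (x ^ (c ^ (t * b))) ^ (c ^ gcd a b)"
    using st power_power_add[of x c "t * b" "gcd a b"] by (simp add: mult.commute)
  also have "\<dots> = x ^ (c ^ gcd a b)"
    using power_power_mult_eq_self[OF assms(2)] by simp
  finally show ?thesis
    by simp
qed (use assms in simp)

lemma power_power_mult_eq_neg:
  fixes x :: "'a::comm_ring_1"
  assumes "prime CHAR('a)" and "x ^ (CHAR('a) ^ a) = - x"
  shows "x ^ (CHAR('a) ^ (a * j)) = (- 1) ^ j * x"
proof (induction j)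
  case (Suc j)
  have "x ^ (CHAR('a) ^ (a * Suc j)) = (x ^ (CHAR('a) ^ a)) ^ (CHAR('a) ^ (a * j))"
    using power_power_add[of x "CHAR('a)" a "a * j"] by simp
  then show ?case
    using Suc assms by (simp add: frobenius_minus)
qed simp

lemma card_power_eq_self_le:
  assumes "n > 1"
  shows "card {x :: 'a::idom. x ^ n = x} \<le> n"
proof -
  define P :: "'a poly" where "P = monom 1 n + [:0, -1:]"
  have "degree P = n"
    using assms unfolding P_def by (subst degree_add_eq_left) (auto simp: degree_monom_eq)
  then have "card {x. poly P x = 0} \<le> n"
    using assms by (metis card_poly_roots_bound degree_0 not_one_less_zero)
  moreover have "{x. poly P x = 0} = {x. x ^ n = x}"
    by (simp add: P_def poly_monom)
  ultimately show ?thesis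
    by simp
qed

lemma degree_sum_monom_strict_mono:
  assumes "strict_mono e"
  shows "degree (\<Sum>i<Suc k. monom (1 :: 'a::comm_ring_1) (e i)) = e k"
proof (induction k)
  case (Suc k)
  have "e k < e (Suc k)"
    using assms by (simp add: strict_mono_Suc_iff)
  then show ?case
    using Suc by (simp only: sum.lessThan_Suc) (subst degree_add_eq_right, auto simp: degree_monom_eq)
qed (simp add: degree_monom_eq)

lemma card_sum_powers_eq_zero_le:
  assumes "strict_mono e"
  shows "card {x :: 'a::idom. (\<Sum>i<Suc k. x ^ e i) = 0} \<le> e k"
proof -
  define P :: "'a poly" where "P = (\<Sum>i<Suc k. monom 1 (e i))"
  have deg: "degree P = e k"
    unfolding P_def by (rule degree_sum_monom_strict_mono[OF assms])
  have "P \<noteq> 0"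
  proof (cases k)
    case 0
    then show ?thesis
      by (simp add: P_def)
  next
    case (Suc j)
    then have "e k > 0"
      using strict_mono_imp_increasing[OF assms, of k] by simp
    then show ?thesis
      using deg by auto
  qed
  then have "card {x. poly P x = 0} \<le> e k"
    using card_poly_roots_bound deg by metis
  then show ?thesis
    by (simp add: P_def poly_sum poly_monom)
qed

lemma card_frobenius_fixed:
  fixes c :: nat
  defines "c \<equiv> CHAR('a::{field,finite})"
  assumes "prime c" and card: "card (UNIV :: 'a set) = c ^ m" and "d > 0" and "d dvd m"
  shows "card {x :: 'a. x ^ (c ^ d) = x} = c ^ d"
proof (rule antisym)
  have c: "c > 1"
    using \<open>prime c\<close> prime_gt_1_nat by blast
  then have "c ^ d > 1"
    using \<open>d > 0\<close> by (rule one_less_power)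
  then show "card {x :: 'a. x ^ (c ^ d) = x} \<le> c ^ d"
    by (rule card_power_eq_self_le)
  have "m \<noteq> 0"
    using exponent_pos_if_card_eq_power[OF card] by simp
  moreover obtain j where "m = d * j"
    using \<open>d dvd m\<close> by (rule dvdE)
  ultimately obtain k where m: "m = d * Suc k"
    by (cases j) auto
  text \<open>\<open>D\<close> is additive and its image lies in the kernel of the trace \<open>T\<close>, a polynomial
    of degree \<open>c ^ (d * k)\<close>, so the kernel of \<open>D\<close> has at least \<open>c ^ d\<close> elements.\<close>
  define D where "D x = x ^ (c ^ d) - x" for x :: 'a
  define T where "T x = (\<Sum>i<Suc k. x ^ (c ^ (d * i)))" for x :: 'a
  have "T (D x) = x ^ (c ^ (d * Suc k)) - x" for x
  proof -
    define f where "f i = x ^ (c ^ (d * i))" for i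
    have "T (D x) = (\<Sum>i<Suc k. f (Suc i) - f i)"
      unfolding T_def D_def f_def using \<open>prime c\<close>
      by (intro sum.cong refl) (simp add: c_def frobenius_diff power_power_add[symmetric])
    also have "\<dots> = f (Suc k) - f 0"
      by (rule sum_lessThan_telescope)
    finally show ?thesis
      by (simp add: f_def)
  qed
  moreover have "x ^ (c ^ m) = x" for x :: 'a
    using power_card_eq_self[of x] card by simp
  ultimately have "range D \<subseteq> {y. T y = 0}"
    using m by auto
  moreover have "card {y. T y = 0} \<le> c ^ (d * k)"
    unfolding T_def using c \<open>d > 0\<close>
    by (intro card_sum_powers_eq_zero_le strict_monoI power_strict_increasing) simp_all
  ultimately have range: "card (range D) \<le> c ^ (d * k)"
    by (meson card_mono finite order_trans)
  have "D (x + y) = D x + D y" for x y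
    unfolding D_def c_def using freshmans_dream'[OF \<open>prime c\<close>[unfolded c_def] refl] by simp
  then have "c ^ (d * k) * c ^ d = card (range D) * card {x. D x = 0}"
    using card_UNIV_eq_card_range_times_card_kernel[of D] card by (simp add: m power_add mult.commute)
  also have "\<dots> \<le> c ^ (d * k) * card {x. D x = 0}"
    using range by (rule mult_le_mono1)
  finally have "c ^ d \<le> card {x. D x = 0}"
    using c by simp
  then show "c ^ d \<le> card {x :: 'a. x ^ (c ^ d) = x}"
    by (simp add: D_def)
qed

lemma card_fixed_twice_eq_fixed_times_negated:
  fixes F :: "'a::field \<Rightarrow> 'a"
  assumes add: "\<And>x y. F (x + y) = F x + F y" and two: "(2 :: 'a) \<noteq> 0"
  shows "card {x. F (F x) = x} = card {x. F x = x} * card {x. F x = - x}"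
proof -
  have neg: "F (- x) = - F x" for x
    using add[of x "- x"] add[of 0 0] by (simp add: eq_neg_iff_add_eq_0)
  have diff: "F (x - y) = F x - F y" for x y
    using add[of x "- y"] neg[of y] by simp
  have half: "F (x / 2) = F x / 2" for x
    using add[of "x / 2" "x / 2"] two by (simp add: field_simps)
  define split where "split x = ((x + F x) / 2, (x - F x) / 2)" for x
  have "bij_betw split {x. F (F x) = x} ({x. F x = x} \<times> {x. F x = - x})"
  proof (rule bij_betw_byWitness[where f' = "\<lambda>(a, b). a + b"])
    show "\<forall>x\<in>{x. F (F x) = x}. (\<lambda>(a, b). a + b) (split x) = x"
      using two by (simp add: split_def field_simps)
    show "\<forall>ab\<in>{x. F x = x} \<times> {x. F x = - x}. split ((\<lambda>(a, b). a + b) ab) = ab"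
      using two by (auto simp: split_def add field_simps)
    show "split ` {x. F (F x) = x} \<subseteq> {x. F x = x} \<times> {x. F x = - x}"
      by (auto simp: split_def half add diff minus_divide_left)
    show "(\<lambda>(a, b). a + b) ` ({x. F x = x} \<times> {x. F x = - x}) \<subseteq> {x. F (F x) = x}"
      by (auto simp: add neg diff)
  qed
  then show ?thesis
    by (simp add: bij_betw_same_card card_cartesian_product)
qed

lemma card_frobenius_negated:
  fixes c :: nat
  defines "c \<equiv> CHAR('a::{field,finite})"
  assumes "prime c" and "odd c" and card: "card (UNIV :: 'a set) = c ^ m"
    and "b > 0" and "2 * b dvd m"
  shows "card {x :: 'a. x ^ (c ^ b) = - x} = c ^ b"
proof -
  define F where "F x = x ^ (c ^ b)" for x :: 'a
  have "card {x. F (F x) = x} = card {x. F x = x} * card {x. F x = - x}"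
    using freshmans_dream'[OF \<open>prime c\<close>[unfolded c_def]] two_neq_zero_if_odd_CHAR \<open>odd c\<close>
    by (intro card_fixed_twice_eq_fixed_times_negated) (simp_all add: F_def c_def)
  moreover have "F (F x) = x ^ (c ^ (2 * b))" for x
    by (simp add: F_def power_power_add[symmetric] mult_2)
  moreover have "card {x :: 'a. x ^ (c ^ (2 * b)) = x} = c ^ b * c ^ b"
    using card_frobenius_fixed[where 'a = 'a, of m "2 * b"] assms
    by (simp add: mult_2 power_add)
  moreover have "card {x :: 'a. x ^ (c ^ b) = x} = c ^ b"
    using card_frobenius_fixed[where 'a = 'a, of m b] assms dvd_mult_right by blast
  ultimately have "c ^ b * c ^ b = c ^ b * card {x :: 'a. x ^ (c ^ b) = - x}"
    by (simp add: F_def)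
  moreover have "c > 0"
    using \<open>prime c\<close> by (simp add: prime_gt_0_nat)
  ultimately show ?thesis
    by auto
qed

lemma frobenius_power_eq_neg_iff:
  fixes x :: "'a::{field,finite}" and c :: nat
  defines "c \<equiv> CHAR('a)"
  assumes "prime c" and card: "card (UNIV :: 'a set) = c ^ m"
    and "b dvd a" and odd: "odd (a div b)" and gcd: "gcd (2 * a) m = 2 * b"
  shows "x ^ (c ^ a) = - x \<longleftrightarrow> x ^ (c ^ b) = - x"
proof
  assume a: "x ^ (c ^ a) = - x"
  have "x ^ (c ^ (2 * a)) = x"
    using power_power_mult_eq_neg[of x a 2] a \<open>prime c\<close> by (simp add: c_def mult.commute)
  moreover have "x ^ (c ^ m) = x"
    using power_card_eq_self[of x] card by simp
  ultimately have "x ^ (c ^ gcd (2 * a) m) = x"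
    by (rule power_power_gcd_eq_self)
  then have "x ^ (c ^ (2 * b)) = x"
    using gcd by simp
  moreover obtain i where i: "a div b = 2 * i + 1"
    using odd by (rule oddE)
  have "a = b * (a div b)"
    using \<open>b dvd a\<close> by simp
  then have "a = i * (2 * b) + b"
    using i by (simp add: algebra_simps)
  ultimately have "x ^ (c ^ a) = x ^ (c ^ b)"
    using power_power_mult_eq_self[of x c "2 * b" i] power_power_add[of x c "i * (2 * b)" b]
    by simp
  then show "x ^ (c ^ b) = - x"
    using a by simp
next
  assume "x ^ (c ^ b) = - x"
  then have "x ^ (c ^ (b * (a div b))) = - x"
    using power_power_mult_eq_neg[of x b "a div b"] \<open>prime c\<close> odd by (simp add: c_def)
  then show "x ^ (c ^ a) = - x"
    using \<open>b dvd a\<close> by simp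
qed

lemma gcd_four_mult_eq_and_odd_quotient:
  fixes m u :: nat
  assumes "m > 0" and "4 dvd m div gcd m u"
  shows "gcd (4 * u) m = 4 * gcd m u" and "odd (u div gcd m u)"
proof -
  define v where "v = gcd m u"
  have "v > 0"
    using assms(1) by (simp add: v_def)
  obtain u' where u: "u = v * u'"
    unfolding v_def by (rule dvdE[OF gcd_dvd2])
  obtain n where "m div v = 4 * n"
    using assms(2) unfolding v_def[symmetric] by (rule dvdE)
  then have m: "m = v * (4 * n)"
    by (metis dvd_mult_div_cancel gcd_dvd1 v_def)
  have "v * gcd (4 * n) u' = gcd m u"
    by (simp add: m u gcd_mult_distrib_nat)
  then have "v * gcd (4 * n) u' = v"
    by (simp add: v_def)
  then have "coprime (4 * n) u'"
    using \<open>v > 0\<close> by (simp add: coprime_iff_gcd_eq_1)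
  then have "coprime 4 u'" and "coprime n u'"
    by simp_all
  then have "odd u'"
    using coprime_common_divisor[of 4 u' 2] by auto
  show "gcd (4 * u) m = 4 * v"
    using \<open>coprime n u'\<close> by (simp add: m u gcd_mult_distrib_nat[symmetric] coprime_iff_gcd_eq_1 gcd.commute mult.left_commute)
  show "odd (u div v)"
    using u \<open>v > 0\<close> \<open>odd u'\<close> by simp
qed

lemma card_range_frobenius_add_self:
  fixes c :: nat
  defines "c \<equiv> CHAR('a::{field,finite})"
  assumes "prime c" and "odd c" and card: "card (UNIV :: 'a set) = c ^ m"
    and gcd: "gcd (4 * u) m = 4 * v" and "odd (u div v)" and "v > 0"
  shows "card (range (\<lambda>x :: 'a. x ^ (c ^ (2 * u)) + x)) = c ^ (m - 2 * v)"
proof -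
  define L where "L x = x ^ (c ^ (2 * u)) + x" for x :: 'a
  have "4 * v dvd m" and "v dvd u"
    using gcd_dvd1[of "4 * u" m] gcd_dvd2[of "4 * u" m] gcd \<open>v > 0\<close> by simp_all
  have "L x = 0 \<longleftrightarrow> x ^ (c ^ (2 * v)) = - x" for x
    using frobenius_power_eq_neg_iff[of m "2 * v" "2 * u" x] assms \<open>v dvd u\<close>
    by (simp add: L_def eq_neg_iff_add_eq_0[symmetric])
  then have "card {x. L x = 0} = c ^ (2 * v)"
    using card_frobenius_negated[of m "2 * v"] assms \<open>4 * v dvd m\<close> by simp
  moreover have "L (x + y) = L x + L y" for x y
    using freshmans_dream'[OF \<open>prime c\<close>[unfolded c_def] refl] by (simp add: L_def c_def)
  moreover have "4 * v \<le> m"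
    using \<open>4 * v dvd m\<close> exponent_pos_if_card_eq_power[OF card] by (rule dvd_imp_le)
  ultimately have "c ^ (m - 2 * v) * c ^ (2 * v) = card (range L) * c ^ (2 * v)"
    using card_UNIV_eq_card_range_times_card_kernel[of L] card by (simp flip: power_add)
  then show ?thesis
    using \<open>prime c\<close> by (simp add: L_def prime_gt_0_nat)
qed

theorem lemma13:
  fixes p m u :: nat
  assumes "prime p" and "odd p" and "m > 0" and "u > 0"
    and "card (UNIV :: 'a::{field,finite} set) = p ^ m"
    and "(m div gcd m u) mod 4 = 0"
  shows "card {c :: 'a. \<exists>x :: 'a. x ^ (p ^ (2 * u)) + x = c ^ (p ^ u)}
           = p ^ (m - 2 * gcd m u)"
proof -
  have p: "p = CHAR('a)"
    using assms(5,1) by (rule CHAR_eq_prime_if_card_eq_power[symmetric])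
  have "4 dvd m div gcd m u"
    using assms(6) by (simp add: mod_0_imp_dvd)
  then have "card (range (\<lambda>x :: 'a. x ^ (p ^ (2 * u)) + x)) = p ^ (m - 2 * gcd m u)"
    using card_range_frobenius_add_self[of m u "gcd m u"] gcd_four_mult_eq_and_odd_quotient[OF assms(3)]
      assms p by simp
  moreover have "inj (\<lambda>c :: 'a. c ^ (p ^ u))"
    using inj_frobenius assms(1) p by simp
  then have "surj (\<lambda>c :: 'a. c ^ (p ^ u))"
    by (simp add: finite_UNIV_inj_surj)
  moreover have "{c. \<exists>x. x ^ (p ^ (2 * u)) + x = c ^ (p ^ u)}
      = (\<lambda>c :: 'a. c ^ (p ^ u)) -` range (\<lambda>x. x ^ (p ^ (2 * u)) + x)"
    by (auto simp: image_iff eq_commute)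
  ultimately show ?thesis
    using card_vimage_inj[OF \<open>inj (\<lambda>c :: 'a. c ^ (p ^ u))\<close>] by simp
qed

end
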